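(* For every $\lambda \in (0,1/2)$ and $\delta > 0$ there are positive constants $\gamma = \gamma(\lambda,\delta)$ and $\beta = \beta(\lambda,\delta)$ such that the following holds. Suppose $p \in (\lambda, 1-\lambda)$, $n \in \mathbb{N}_+$, and $h : \{0,1\}^{2n} \to \{0,1\}$ is a function with $\mathbb{E}_{x \sim \mu_{p,2n}}[h(x)] \geq \delta$ and $\mathbf{I}^{(p)}[h] \leq \gamma \cdot n$. Then $\mathbb{E}_{z \sim \mathcal{D}_{p,2n}}[h(z)] \geq \beta$.
   Context: $\mu_{p,m}$ is the product $p$-biased distribution on $\{0,1\}^m$. For $h:\{0,1\}^m\to\{0,1\}$, $\mathrm{Inf}^{(p)}[h,i] = \mathbb{E}_{x\sim\mu_{p,m}}\big[(h(x)-\mathbb{E}_{s\sim\mu_{p,1}}[h(x^{i\to s})])^2\big]$ (with $x^{i\to s}$ being $x$ with coordinate $i$ set to $s$), and $\mathbf{I}^{(p)}[h] = \sum_{i=1}^m \mathrm{Inf}^{(p)}[h,i]$. The pull-back distribution $\mathcal{D}_{p,2n}$ on $\{0,1\}^{2n}$ is the distribution of $z$ obtained by drawing a uniformly random $2$-to-$1$ map $\pi:[2n]\to[n]$ (each element of $[n]$ has exactly two preimages), independently drawing $x\sim\mu_{p,n}$, and setting $z_i = x_{\pi(i)}$ for $i\in[2n]$. *)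

theory Defs
  imports "HOL-Analysis.Analysis"
begin

text \<open>Points of the cube \{0,1\}^m are functions on the index set \{0..<m\}
  (coordinates 0..m-1), extensional outside (PiE). True encodes 1.\<close>

definition cube :: "nat \<Rightarrow> (nat \<Rightarrow> bool) set" where
  "cube m = PiE {0..<m} (\<lambda>_. UNIV)"

definition pbias :: "real \<Rightarrow> nat \<Rightarrow> (nat \<Rightarrow> bool) \<Rightarrow> real" where
  "pbias p m x = (\<Prod>i<m. if x i then p else 1 - p)"

definition pexp :: "real \<Rightarrow> nat \<Rightarrow> ((nat \<Rightarrow> bool) \<Rightarrow> real) \<Rightarrow> real" where
  "pexp p m f = (\<Sum>x\<in>cube m. pbias p m x * f x)"

text \<open>Influence of coordinate i on a Boolean function h, under mu_{p,m}.
  E_{s ~ mu_{p,1}}[h(x^{i->s})] = p h(x^{i->1}) + (1-p) h(x^{i->0}).\<close>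
definition influence :: "real \<Rightarrow> nat \<Rightarrow> ((nat \<Rightarrow> bool) \<Rightarrow> bool) \<Rightarrow> nat \<Rightarrow> real" where
  "influence p m h i =
     pexp p m (\<lambda>x. (of_bool (h x)
        - (p * of_bool (h (x(i := True))) + (1 - p) * of_bool (h (x(i := False)))))\<^sup>2)"

definition total_influence :: "real \<Rightarrow> nat \<Rightarrow> ((nat \<Rightarrow> bool) \<Rightarrow> bool) \<Rightarrow> real" where
  "total_influence p m h = (\<Sum>i<m. influence p m h i)"

definition two_to_one_maps :: "nat \<Rightarrow> (nat \<Rightarrow> nat) set" where
  "two_to_one_maps n = {\<pi> \<in> PiE {0..<2*n} (\<lambda>_. {0..<n}).
      \<forall>j<n. card {i\<in>{0..<2*n}. \<pi> i = j} = 2}"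

definition pullback_exp :: "real \<Rightarrow> nat \<Rightarrow> ((nat \<Rightarrow> bool) \<Rightarrow> bool) \<Rightarrow> real" where
  "pullback_exp p n h =
     (\<Sum>\<pi>\<in>two_to_one_maps n.
        pexp p n (\<lambda>x. of_bool (h (restrict (\<lambda>i. x (\<pi> i)) {0..<2*n}))))
     / real (card (two_to_one_maps n))"

end

theory Submission
  imports Defs
begin

text \<open>Split the mass of h under mu_{p,2n} according to the parity of the Hamming weight.
  Flipping coordinate i matches odd-weight points with even-weight ones and changes the measure
  by a factor of at least lam; on a matched pair where h changes value, the influence of i
  collects at least lam^2 times the measure of the odd point. Averaged over i, a total influence
  of at most lam^2 delta n therefore leaves mass at least delta lam / 4 on even weights.
  The pull-back distribution lives on even weights: by symmetry all points z of weight 2k are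
  compatible with the same number of two-to-one maps, so z has probability
  C(n,k) p^k (1-p)^(n-k) / C(2n,2k). By Vandermonde's identity and the log-concavity of binomial
  coefficients, this is at least p^(2k) (1-p)^(2n-2k), the probability of z under mu_{p,2n}.\<close>

section \<open>Hamming weight and parity\<close>

definition hamming_weight :: "nat \<Rightarrow> (nat \<Rightarrow> bool) \<Rightarrow> nat" where
  "hamming_weight m z = card {i. i < m \<and> z i}"

definition flip :: "nat \<Rightarrow> (nat \<Rightarrow> bool) \<Rightarrow> nat \<Rightarrow> bool" where
  "flip i z = z(i := \<not> z i)"

lemma finite_cube: "finite (cube m)"
  unfolding cube_def by (intro finite_PiE) auto

lemma hamming_weight_le: "hamming_weight m z \<le> m"
  unfolding hamming_weight_def by (rule card_mono[of "{..<m}", simplified]) auto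

lemma even_hamming_weight_flip:
  assumes "i < m"
  shows "even (hamming_weight m (flip i z)) \<longleftrightarrow> odd (hamming_weight m z)"
proof -
  let ?S = "{j. j < m \<and> z j}"
  have "{j. j < m \<and> flip i z j} = (if z i then ?S - {i} else insert i ?S)"
    using assms by (auto simp: flip_def)
  then show ?thesis
    using assms by (cases "z i") (auto simp: hamming_weight_def card_gt_0_iff)
qed

lemma flip_flip [simp]: "flip i (flip i z) = z"
  by (auto simp: flip_def)

lemma flip_in_cube: "i < m \<Longrightarrow> z \<in> cube m \<Longrightarrow> flip i z \<in> cube m"
  by (auto simp: cube_def flip_def PiE_def extensional_def)

lemma pbias_nonneg: "0 \<le> p \<Longrightarrow> p \<le> 1 \<Longrightarrow> 0 \<le> pbias p m z"
  unfolding pbias_def by (intro prod_nonneg) auto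

lemma pbias_eq_hamming_weight:
  "pbias p m z = p ^ hamming_weight m z * (1 - p) ^ (m - hamming_weight m z)"
proof -
  have "pbias p m z = p ^ card ({..<m} \<inter> {i. z i}) * (1 - p) ^ card ({..<m} \<inter> - {i. z i})"
    unfolding pbias_def by (simp add: prod.If_cases)
  moreover have "{..<m} \<inter> {i. z i} = {i. i < m \<and> z i}"
    and "{..<m} \<inter> - {i. z i} = {..<m} - {i. i < m \<and> z i}" by auto
  ultimately show ?thesis
    unfolding hamming_weight_def by (simp add: card_Diff_subset subset_eq)
qed

lemma pbias_flip_ge:
  assumes "0 \<le> lam" "lam \<le> p" "lam \<le> 1 - p" "i < m"
  shows "lam * pbias p m z \<le> pbias p m (flip i z)"
proof -
  let ?w = "\<lambda>z j. if z j then p else 1 - p"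
  have i: "i \<in> {..<m}" using assms by simp
  have rest: "prod (?w (flip i z)) ({..<m} - {i}) = prod (?w z) ({..<m} - {i})"
    by (rule prod.cong) (auto simp: flip_def)
  have "lam * ?w z i \<le> ?w (flip i z) i"
    using assms by (auto simp: flip_def intro: order_trans[OF mult_right_le_one_le])
  then have "lam * ?w z i * prod (?w z) ({..<m} - {i})
      \<le> ?w (flip i z) i * prod (?w z) ({..<m} - {i})"
    using assms by (intro mult_right_mono prod_nonneg) auto
  then show ?thesis
    unfolding pbias_def prod.remove[OF finite_lessThan i] rest by (simp add: mult.assoc)
qed

lemma card_cube_hamming_weight_eq: "card {x\<in>cube m. hamming_weight m x = k} = m choose k"
proof -
  have "bij_betw (\<lambda>x. {i. i < m \<and> x i}) {x\<in>cube m. hamming_weight m x = k}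
      {B. B \<subseteq> {..<m} \<and> card B = k}"
  proof (rule bij_betw_byWitness[where f' = "\<lambda>B. restrict (\<lambda>i. i \<in> B) {0..<m}"])
    show "\<forall>x\<in>{x\<in>cube m. hamming_weight m x = k}. restrict (\<lambda>i. i \<in> {i. i < m \<and> x i}) {0..<m} = x"
    proof (intro ballI ext)
      fix x i assume x: "x \<in> {x\<in>cube m. hamming_weight m x = k}"
      show "restrict (\<lambda>i. i \<in> {i. i < m \<and> x i}) {0..<m} i = x i"
        using PiE_arb[of x "{0..<m}" "\<lambda>_. UNIV" i] x by (simp add: cube_def)
    qed
    have "{i. i < m \<and> restrict (\<lambda>i. i \<in> B) {0..<m} i} = B" if "B \<subseteq> {..<m}" for B
      using that by auto
    then show "(\<lambda>B. restrict (\<lambda>i. i \<in> B) {0..<m}) ` {B. B \<subseteq> {..<m} \<and> card B = k}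
        \<subseteq> {x\<in>cube m. hamming_weight m x = k}"
      by (auto simp: hamming_weight_def cube_def restrict_PiE_iff)
  qed (auto simp: hamming_weight_def)
  then have "card {x\<in>cube m. hamming_weight m x = k} = card {B. B \<subseteq> {..<m} \<and> card B = k}"
    by (rule bij_betw_same_card)
  also have "\<dots> = m choose k"
    using n_subsets[of "{..<m}" k] by simp
  finally show ?thesis .
qed

definition even_mass :: "real \<Rightarrow> nat \<Rightarrow> ((nat \<Rightarrow> bool) \<Rightarrow> bool) \<Rightarrow> real" where
  "even_mass p m h = (\<Sum>z\<in>{z\<in>cube m. even (hamming_weight m z)}. pbias p m z * of_bool (h z))"

definition odd_mass :: "real \<Rightarrow> nat \<Rightarrow> ((nat \<Rightarrow> bool) \<Rightarrow> bool) \<Rightarrow> real" where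
  "odd_mass p m h = (\<Sum>z\<in>{z\<in>cube m. odd (hamming_weight m z)}. pbias p m z * of_bool (h z))"

definition influence_term :: "real \<Rightarrow> ((nat \<Rightarrow> bool) \<Rightarrow> bool) \<Rightarrow> nat \<Rightarrow> (nat \<Rightarrow> bool) \<Rightarrow> real" where
  "influence_term p h i z =
     (of_bool (h z) - (p * of_bool (h (z(i := True))) + (1 - p) * of_bool (h (z(i := False)))))\<^sup>2"

lemma influence_eq_sum: "influence p m h i = (\<Sum>z\<in>cube m. pbias p m z * influence_term p h i z)"
  unfolding influence_def pexp_def influence_term_def ..

lemma pexp_eq_even_mass_plus_odd_mass:
  "pexp p m (\<lambda>z. of_bool (h z)) = even_mass p m h + odd_mass p m h"
  unfolding pexp_def even_mass_def odd_mass_def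
  by (subst sum.union_disjoint[symmetric]) (auto intro!: sum.cong simp: finite_cube)

lemma even_mass_nonneg: "0 \<le> p \<Longrightarrow> p \<le> 1 \<Longrightarrow> 0 \<le> even_mass p m h"
  unfolding even_mass_def by (intro sum_nonneg) (simp add: pbias_nonneg)

lemma influence_term_ge:
  assumes "lam \<le> p" "lam \<le> 1 - p" "0 \<le> lam" "h z" "\<not> h (flip i z)"
  shows "lam\<^sup>2 \<le> influence_term p h i z"
proof (cases "z i")
  case True
  then have "z(i := True) = z" "z(i := False) = flip i z" by (auto simp: flip_def fun_eq_iff)
  then show ?thesis
    using assms by (simp add: influence_term_def power_mono)
next
  case False
  then have "z(i := False) = z" "z(i := True) = flip i z" by (auto simp: flip_def fun_eq_iff)
  then show ?thesis
    using assms by (simp add: influence_term_def power_mono)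
qed

lemma odd_mass_le_even_mass_plus_influence:
  assumes "0 \<le> lam" "lam \<le> p" "lam \<le> 1 - p" "i < m"
  shows "lam\<^sup>2 * odd_mass p m h \<le> lam * even_mass p m h + influence p m h i"
proof -
  let ?g = "\<lambda>z. pbias p m z * of_bool (h z)"
  let ?t = "\<lambda>z. pbias p m z * influence_term p h i z"
  let ?Odd = "{z\<in>cube m. odd (hamming_weight m z)}"
  have p01: "0 \<le> p" "p \<le> 1" using assms by auto
  have t_nonneg: "0 \<le> ?t z" for z
    using p01 by (simp add: pbias_nonneg influence_term_def)
  have pointwise: "lam\<^sup>2 * ?g z \<le> lam * ?g (flip i z) + ?t z" for z
  proof (cases "h z")
    case hz: True
    show ?thesis
    proof (cases "h (flip i z)")
      case True
      have "lam * (lam * pbias p m z) \<le> lam * pbias p m (flip i z)"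
        using assms by (intro mult_left_mono pbias_flip_ge) auto
      then show ?thesis
        using hz True t_nonneg[of z] by (simp add: power2_eq_square mult.assoc)
    next
      case False
      have "lam\<^sup>2 * pbias p m z \<le> ?t z"
        using assms hz False p01
        by (subst mult.commute) (intro mult_left_mono influence_term_ge pbias_nonneg; simp)
      then show ?thesis using hz False by simp
    qed
  qed (use t_nonneg p01 assms pbias_nonneg in simp)
  have "lam\<^sup>2 * odd_mass p m h = (\<Sum>z\<in>?Odd. lam\<^sup>2 * ?g z)"
    unfolding odd_mass_def by (simp add: sum_distrib_left)
  also have "\<dots> \<le> (\<Sum>z\<in>?Odd. lam * ?g (flip i z) + ?t z)"
    by (intro sum_mono pointwise)
  also have "\<dots> = lam * (\<Sum>z\<in>?Odd. ?g (flip i z)) + (\<Sum>z\<in>?Odd. ?t z)"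
    by (simp add: sum.distrib sum_distrib_left)
  also have "(\<Sum>z\<in>?Odd. ?g (flip i z)) = even_mass p m h"
    unfolding even_mass_def
    by (rule sum.reindex_bij_witness[where i="flip i" and j="flip i"])
       (use assms flip_in_cube even_hamming_weight_flip in auto)
  also have "(\<Sum>z\<in>?Odd. ?t z) \<le> influence p m h i"
    unfolding influence_eq_sum by (intro sum_mono2 finite_cube t_nonneg) auto
  finally show ?thesis by simp
qed

lemma even_mass_ge_of_low_total_influence:
  assumes "0 < lam" "lam \<le> p" "lam \<le> 1 - p" "0 < m"
    and mean: "\<delta> \<le> pexp p m (\<lambda>z. of_bool (h z))"
    and low_influence: "2 * total_influence p m h \<le> lam\<^sup>2 * \<delta> * real m"
  shows "\<delta> * lam / 4 \<le> even_mass p m h"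
proof -
  define E where "E = even_mass p m h"
  define D where "D = odd_mass p m h"
  have "real m * (lam\<^sup>2 * D) = (\<Sum>i<m. lam\<^sup>2 * D)" by simp
  also have "\<dots> \<le> (\<Sum>i<m. lam * E + influence p m h i)"
    unfolding E_def D_def
    by (intro sum_mono odd_mass_le_even_mass_plus_influence) (use assms in auto)
  also have "\<dots> = real m * (lam * E) + total_influence p m h"
    by (simp add: sum.distrib total_influence_def)
  finally have "real m * (lam * (lam * D)) \<le> real m * (lam * (E + lam * \<delta> / 2))"
    using low_influence by (simp add: power2_eq_square algebra_simps)
  then have "lam * (lam * D) \<le> lam * (E + lam * \<delta> / 2)"
    using \<open>0 < m\<close> by simp
  then have odd: "lam * D \<le> E + lam * \<delta> / 2"
    using \<open>0 < lam\<close> by simp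
  have "\<delta> \<le> E + D"
    using mean unfolding E_def D_def pexp_eq_even_mass_plus_odd_mass .
  then have "lam * \<delta> \<le> lam * E + lam * D"
    using \<open>0 < lam\<close> by (simp add: mult_left_mono flip: distrib_left)
  moreover have "lam * E \<le> E"
    using assms even_mass_nonneg[of p m h] by (simp add: E_def mult_left_le_one_le)
  ultimately have "lam * \<delta> \<le> 4 * E"
    using odd by linarith
  then show ?thesis
    by (simp add: E_def mult.commute)
qed

section \<open>Binomial coefficients and Bernstein polynomials\<close>

lemma binomial_mult_le_step:
  assumes "a \<le> b"
  shows "(n choose a) * (n choose Suc b) \<le> (n choose Suc a) * (n choose b)"
proof -
  have absorb: "Suc i * (n choose Suc i) = (n - i) * (n choose i)" for i
    using binomial_absorption[of i n] binomial_absorb_comp[of n i] by simp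
  have "((n choose a) * (n choose Suc b)) * (Suc a * Suc b)
      = Suc a * (n choose a) * (Suc b * (n choose Suc b))"
    by (simp only: mult_ac)
  also have "\<dots> = (Suc a * (n - b)) * ((n choose a) * (n choose b))"
    unfolding absorb by (simp only: mult_ac)
  also have "\<dots> \<le> (Suc b * (n - a)) * ((n choose a) * (n choose b))"
    using assms by (intro mult_right_mono mult_le_mono) auto
  also have "\<dots> = Suc b * (n choose b) * ((n - a) * (n choose a))"
    by (simp only: mult_ac)
  also have "\<dots> = ((n choose Suc a) * (n choose b)) * (Suc a * Suc b)"
    unfolding absorb[symmetric] by (simp only: mult_ac)
  finally show ?thesis
    using mult_le_cancel2[of _ "Suc a * Suc b"] by simp
qed

lemma binomial_mult_le_square_centered:
  "d \<le> k \<Longrightarrow> (n choose (k - d)) * (n choose (k + d)) \<le> (n choose k)\<^sup>2"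
proof (induction d)
  case 0
  then show ?case by (simp add: power2_eq_square)
next
  case (Suc d)
  have "(n choose (k - Suc d)) * (n choose Suc (k + d))
      \<le> (n choose Suc (k - Suc d)) * (n choose (k + d))"
    by (rule binomial_mult_le_step) simp
  also have "Suc (k - Suc d) = k - d" using Suc by simp
  finally show ?case using Suc by simp
qed

lemma binomial_mult_le_square:
  assumes "j \<le> 2 * k"
  shows "(n choose j) * (n choose (2 * k - j)) \<le> (n choose k)\<^sup>2"
proof (cases "j \<le> k")
  case True
  then show ?thesis
    using binomial_mult_le_square_centered[of "k - j" k n] by (simp add: mult_2)
next
  case False
  then show ?thesis
    using binomial_mult_le_square_centered[of "j - k" k n] assms
    by (simp add: mult.commute numeral_2_eq_2)
qed

lemma mult_le_mult_mean_of_mult_le_square: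
  fixes x y K :: real
  assumes "0 \<le> x" "0 \<le> y" "0 \<le> K" "x * y \<le> K\<^sup>2"
  shows "x * y \<le> K * ((x + y) / 2)"
proof -
  have "sqrt (x * y) \<le> K"
    using assms real_sqrt_le_mono[of "x * y" "K\<^sup>2"] by simp
  moreover have "sqrt (x * y) \<le> (x + y) / 2"
    using arith_geo_mean_sqrt assms by simp
  ultimately have "sqrt (x * y) * sqrt (x * y) \<le> K * ((x + y) / 2)"
    using assms by (intro mult_mono) auto
  then show ?thesis using assms by simp
qed

lemma Bernstein_convolution:
  "Bernstein (m + n) k x = (\<Sum>j\<le>k. Bernstein m j x * Bernstein n (k - j) x)"
proof -
  have summand: "real (m choose j) * real (n choose (k - j)) * (x ^ k * (1 - x) ^ (m + n - k))
      = Bernstein m j x * Bernstein n (k - j) x" if "j \<le> k" for j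
  proof (cases "j \<le> m \<and> k - j \<le> n")
    case True
    have "x ^ k = x ^ j * x ^ (k - j)"
      using that by (simp flip: power_add)
    moreover have "m + n - k = (m - j) + (n - (k - j))"
      using True that by arith
    ultimately show ?thesis
      by (simp add: Bernstein_def power_add)
  qed (auto simp: Bernstein_def)
  have "Bernstein (m + n) k x
      = real (\<Sum>j\<le>k. (m choose j) * (n choose (k - j))) * (x ^ k * (1 - x) ^ (m + n - k))"
    by (simp add: Bernstein_def vandermonde)
  also have "\<dots> = (\<Sum>j\<le>k. Bernstein m j x * Bernstein n (k - j) x)"
    unfolding of_nat_sum sum_distrib_right by (intro sum.cong) (simp_all add: summand)
  finally show ?thesis .
qed

lemma Bernstein_mult_le_square:
  assumes "j \<le> 2 * k" "0 \<le> x" "x \<le> 1"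
  shows "Bernstein n j x * Bernstein n (2 * k - j) x \<le> (Bernstein n k x)\<^sup>2"
proof (cases "j \<le> n \<and> 2 * k - j \<le> n")
  case True
  have "j + (2 * k - j) = k + k" "(n - j) + (n - (2 * k - j)) = (n - k) + (n - k)"
    using assms True by auto
  then have "x ^ j * x ^ (2 * k - j) = (x ^ k)\<^sup>2"
    and "(1 - x) ^ (n - j) * (1 - x) ^ (n - (2 * k - j)) = ((1 - x) ^ (n - k))\<^sup>2"
    by (simp_all only: power2_eq_square flip: power_add)
  then have "Bernstein n j x * Bernstein n (2 * k - j) x
      = real ((n choose j) * (n choose (2 * k - j))) * (x ^ k * (1 - x) ^ (n - k))\<^sup>2"
    and "(Bernstein n k x)\<^sup>2 = real ((n choose k)\<^sup>2) * (x ^ k * (1 - x) ^ (n - k))\<^sup>2"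
    unfolding Bernstein_def by (simp_all add: power_mult_distrib ac_simps)
  moreover have "real ((n choose j) * (n choose (2 * k - j))) \<le> real ((n choose k)\<^sup>2)"
    by (rule of_nat_mono) (rule binomial_mult_le_square[OF assms(1)])
  ultimately show ?thesis
    by (simp add: mult_right_mono)
qed (auto simp: Bernstein_def binomial_eq_0)

lemma sum_Bernstein_le_1:
  assumes "0 \<le> x" "x \<le> 1"
  shows "(\<Sum>j\<le>r. Bernstein n j x) \<le> 1"
proof -
  have "(\<Sum>j\<le>r. Bernstein n j x) = (\<Sum>j\<in>{..r} \<inter> {..n}. Bernstein n j x)"
    by (rule sum.mono_neutral_right) (auto simp: Bernstein_def)
  also have "\<dots> \<le> (\<Sum>j\<le>n. Bernstein n j x)"
    by (rule sum_mono2) (auto simp: assms Bernstein_nonneg)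
  finally show ?thesis by simp
qed

lemma Bernstein_double_le:
  assumes "0 \<le> x" "x \<le> 1"
  shows "Bernstein (2 * n) (2 * k) x \<le> Bernstein n k x"
proof -
  let ?B = "\<lambda>j. Bernstein n j x"
  have "Bernstein (2 * n) (2 * k) x = (\<Sum>j\<le>2 * k. ?B j * ?B (2 * k - j))"
    using Bernstein_convolution[of n n] by (simp add: mult_2)
  also have "\<dots> \<le> (\<Sum>j\<le>2 * k. ?B k * ((?B j + ?B (2 * k - j)) / 2))"
    using assms
    by (intro sum_mono mult_le_mult_mean_of_mult_le_square Bernstein_nonneg
        Bernstein_mult_le_square) auto
  also have "\<dots> = ?B k * (((\<Sum>j\<le>2 * k. ?B j) + (\<Sum>j\<le>2 * k. ?B (2 * k - j))) / 2)"
    by (simp only: sum.distrib[symmetric] sum_divide_distrib sum_distrib_left)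
  also have "(\<Sum>j\<le>2 * k. ?B (2 * k - j)) = (\<Sum>j\<le>2 * k. ?B j)"
    using sum.atLeastAtMost_rev[of "\<lambda>j. ?B (2 * k - j)" 0 "2 * k"] by (simp add: atLeast0AtMost)
  also have "?B k * (((\<Sum>j\<le>2 * k. ?B j) + (\<Sum>j\<le>2 * k. ?B j)) / 2) \<le> ?B k * 1"
    using assms sum_Bernstein_le_1[OF assms] by (intro mult_left_mono Bernstein_nonneg) auto
  finally show ?thesis by simp
qed

section \<open>Two-to-one maps and the pull-back distribution\<close>

lemma obtain_permutes_image_eq:
  assumes "finite S" "A \<subseteq> S" "B \<subseteq> S" "card A = card B"
  obtains \<sigma> where "\<sigma> permutes S" "\<sigma> ` A = B"
proof -
  have fin: "finite A" "finite B"
    using assms finite_subset by auto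
  obtain f where f: "bij_betw f A B"
    using finite_same_card_bij[OF fin assms(4)] by blast
  have "card (S - A) = card (S - B)"
    using assms fin by (simp add: card_Diff_subset)
  then obtain g where g: "bij_betw g (S - A) (S - B)"
    using finite_same_card_bij[of "S - A" "S - B"] assms(1) by blast
  define \<sigma> where "\<sigma> x = (if x \<in> A then f x else if x \<in> S then g x else x)" for x
  have on_A: "bij_betw \<sigma> A B"
    using f by (rule bij_betw_cong[THEN iffD1, rotated]) (simp add: \<sigma>_def)
  have "bij_betw \<sigma> (S - A) (S - B)"
    using g by (rule bij_betw_cong[THEN iffD1, rotated]) (simp add: \<sigma>_def)
  with on_A have "bij_betw \<sigma> (A \<union> (S - A)) (B \<union> (S - B))"
    by (rule bij_betw_combine) blast
  then have "\<sigma> permutes S"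
    using assms by (intro bij_imp_permutes) (auto simp: \<sigma>_def Un_absorb1)
  moreover have "\<sigma> ` A = B"
    using on_A by (simp add: bij_betw_def)
  ultimately show ?thesis using that by blast
qed

lemma finite_two_to_one_maps: "finite (two_to_one_maps n)"
proof -
  have "finite (PiE {0..<2 * n} (\<lambda>_. {0..<n}))" by (intro finite_PiE) auto
  then show ?thesis unfolding two_to_one_maps_def by simp
qed

lemma two_to_one_maps_nonempty: "two_to_one_maps n \<noteq> {}"
proof -
  define \<pi> where "\<pi> = restrict (\<lambda>i. i div 2) {0..<2 * n}"
  have "{i\<in>{0..<2 * n}. \<pi> i = j} = {2 * j, 2 * j + 1}" if "j < n" for j
    using that by (auto simp: \<pi>_def)
  then have "\<pi> \<in> two_to_one_maps n"
    unfolding two_to_one_maps_def by (auto simp: \<pi>_def)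
  then show ?thesis by blast
qed

lemma two_to_one_maps_less: "\<pi> \<in> two_to_one_maps n \<Longrightarrow> i < 2 * n \<Longrightarrow> \<pi> i < n"
  unfolding two_to_one_maps_def by auto

lemma card_fibre_two_to_one_map:
  "\<pi> \<in> two_to_one_maps n \<Longrightarrow> j < n \<Longrightarrow> card {i\<in>{0..<2 * n}. \<pi> i = j} = 2"
  unfolding two_to_one_maps_def by auto

lemma two_to_one_map_surj:
  assumes "\<pi> \<in> two_to_one_maps n" "j < n"
  obtains i where "i < 2 * n" "\<pi> i = j"
proof -
  have "{i\<in>{0..<2 * n}. \<pi> i = j} \<noteq> {}"
    using card_fibre_two_to_one_map[OF assms] by (metis card.empty zero_neq_numeral)
  then show ?thesis using that by auto
qed

lemma two_to_one_maps_comp_permutes: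
  assumes "\<pi> \<in> two_to_one_maps n" "\<sigma> permutes {0..<2 * n}"
  shows "\<pi> \<circ> \<sigma> \<in> two_to_one_maps n"
proof -
  have \<sigma>_less: "\<sigma> i < 2 * n \<longleftrightarrow> i < 2 * n" for i
    using permutes_in_image[OF assms(2), of i] by simp
  have inv_less: "inv \<sigma> i < 2 * n \<longleftrightarrow> i < 2 * n" for i
    using permutes_in_image[OF permutes_inv[OF assms(2)], of i] by simp
  have "\<pi> \<circ> \<sigma> \<in> PiE {0..<2 * n} (\<lambda>_. {0..<n})"
    using assms \<sigma>_less permutes_not_in[OF assms(2)]
    by (auto simp: two_to_one_maps_def PiE_def extensional_def)
  moreover have "card {i\<in>{0..<2 * n}. (\<pi> \<circ> \<sigma>) i = j} = 2" if "j < n" for j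
  proof -
    have "\<sigma> ` {i\<in>{0..<2 * n}. (\<pi> \<circ> \<sigma>) i = j} = {i\<in>{0..<2 * n}. \<pi> i = j}"
      using \<sigma>_less inv_less permutes_inverses(1)[OF assms(2)]
      by (auto intro!: image_eqI[of _ _ "inv \<sigma> _"])
    then show ?thesis
      using card_image[OF inj_on_subset[OF permutes_inj[OF assms(2)]]]
        card_fibre_two_to_one_map[OF assms(1) that] by (metis subset_UNIV)
  qed
  ultimately show ?thesis
    unfolding two_to_one_maps_def by blast
qed

definition pullback_point :: "nat \<Rightarrow> (nat \<Rightarrow> nat) \<Rightarrow> (nat \<Rightarrow> bool) \<Rightarrow> nat \<Rightarrow> bool" where
  "pullback_point n \<pi> x = restrict (\<lambda>i. x (\<pi> i)) {0..<2 * n}"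

definition constant_on_fibres :: "nat \<Rightarrow> (nat \<Rightarrow> nat) \<Rightarrow> (nat \<Rightarrow> bool) \<Rightarrow> bool" where
  "constant_on_fibres n \<pi> z \<longleftrightarrow> (\<forall>i<2 * n. \<forall>j<2 * n. \<pi> i = \<pi> j \<longrightarrow> z i = z j)"

lemma hamming_weight_pullback_point:
  assumes "\<pi> \<in> two_to_one_maps n"
  shows "hamming_weight (2 * n) (pullback_point n \<pi> x) = 2 * hamming_weight n x"
proof -
  let ?fibre = "\<lambda>j. {i\<in>{0..<2 * n}. \<pi> i = j}"
  have "{i. i < 2 * n \<and> pullback_point n \<pi> x i} = (\<Union>j\<in>{j. j < n \<and> x j}. ?fibre j)"
    using two_to_one_maps_less[OF assms] by (auto simp: pullback_point_def)
  moreover have "card (\<Union>j\<in>{j. j < n \<and> x j}. ?fibre j) = (\<Sum>j\<in>{j. j < n \<and> x j}. card (?fibre j))"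
    by (rule card_UN_disjoint) auto
  ultimately show ?thesis
    unfolding hamming_weight_def using card_fibre_two_to_one_map[OF assms] by simp
qed

lemma bij_betw_pullback_point:
  assumes "\<pi> \<in> two_to_one_maps n"
  shows "bij_betw (pullback_point n \<pi>) (cube n) {z\<in>cube (2 * n). constant_on_fibres n \<pi> z}"
proof -
  define push where "push z = restrict (\<lambda>j. \<exists>i<2 * n. \<pi> i = j \<and> z i) {0..<n}" for z
  show ?thesis
  proof (rule bij_betw_byWitness[where f' = push])
    show "\<forall>x\<in>cube n. push (pullback_point n \<pi> x) = x"
    proof (intro ballI ext)
      fix x j assume x: "x \<in> cube n"
      show "push (pullback_point n \<pi> x) j = x j"
      proof (cases "j < n")
        case True
        then obtain i where "i < 2 * n" "\<pi> i = j"
          using two_to_one_map_surj[OF assms] by blast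
        then show ?thesis
          using True by (auto simp: push_def pullback_point_def)
      next
        case False
        then show ?thesis
          using PiE_arb[OF x[unfolded cube_def], of j] by (simp add: push_def)
      qed
    qed
    show "\<forall>z\<in>{z\<in>cube (2 * n). constant_on_fibres n \<pi> z}. pullback_point n \<pi> (push z) = z"
    proof (intro ballI ext)
      fix z i assume z: "z \<in> {z\<in>cube (2 * n). constant_on_fibres n \<pi> z}"
      show "pullback_point n \<pi> (push z) i = z i"
      proof (cases "i < 2 * n")
        case True
        have "(\<exists>i'<2 * n. \<pi> i' = \<pi> i \<and> z i') = z i"
          using z True unfolding constant_on_fibres_def by blast
        then show ?thesis
          using True two_to_one_maps_less[OF assms True] by (simp add: push_def pullback_point_def)
      next
        case False
        then show ?thesis
          using z PiE_arb[of z "{0..<2 * n}" "\<lambda>_. UNIV" i]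
          by (simp add: cube_def pullback_point_def)
      qed
    qed
    show "pullback_point n \<pi> ` cube n \<subseteq> {z\<in>cube (2 * n). constant_on_fibres n \<pi> z}"
      by (auto simp: pullback_point_def cube_def constant_on_fibres_def restrict_PiE_iff)
    show "push ` {z\<in>cube (2 * n). constant_on_fibres n \<pi> z} \<subseteq> cube n"
      by (auto simp: push_def cube_def restrict_PiE_iff)
  qed
qed

definition compatible_maps :: "nat \<Rightarrow> (nat \<Rightarrow> bool) \<Rightarrow> nat" where
  "compatible_maps n z = card {\<pi>\<in>two_to_one_maps n. constant_on_fibres n \<pi> z}"

lemma constant_on_fibres_comp_permutes:
  assumes "\<sigma> permutes {0..<2 * n}"
  shows "constant_on_fibres n (\<pi> \<circ> \<sigma>) (z \<circ> \<sigma>) \<longleftrightarrow> constant_on_fibres n \<pi> z"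
proof -
  have \<sigma>_less: "\<sigma> i < 2 * n \<longleftrightarrow> i < 2 * n" for i
    using permutes_in_image[OF assms, of i] by simp
  have inv_less: "inv \<sigma> i < 2 * n \<longleftrightarrow> i < 2 * n" for i
    using permutes_in_image[OF permutes_inv[OF assms], of i] by simp
  show ?thesis
  proof
    assume comp: "constant_on_fibres n (\<pi> \<circ> \<sigma>) (z \<circ> \<sigma>)"
    show "constant_on_fibres n \<pi> z"
      unfolding constant_on_fibres_def
    proof (intro allI impI)
      fix i j assume "i < 2 * n" "j < 2 * n" "\<pi> i = \<pi> j"
      then show "z i = z j"
        using comp[unfolded constant_on_fibres_def, rule_format, of "inv \<sigma> i" "inv \<sigma> j"]
        by (simp add: inv_less permutes_inverses(1)[OF assms])
    qed
  next
    assume "constant_on_fibres n \<pi> z"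
    then show "constant_on_fibres n (\<pi> \<circ> \<sigma>) (z \<circ> \<sigma>)"
      unfolding constant_on_fibres_def by (simp add: \<sigma>_less)
  qed
qed

lemma compatible_maps_comp_permutes:
  assumes "\<sigma> permutes {0..<2 * n}"
  shows "compatible_maps n (z \<circ> \<sigma>) = compatible_maps n z"
proof -
  have inv: "inv \<sigma> permutes {0..<2 * n}" using permutes_inv[OF assms] .
  have "bij_betw (\<lambda>\<pi>. \<pi> \<circ> \<sigma>) {\<pi>\<in>two_to_one_maps n. constant_on_fibres n \<pi> z}
      {\<pi>\<in>two_to_one_maps n. constant_on_fibres n \<pi> (z \<circ> \<sigma>)}"
  proof (rule bij_betw_byWitness[where f' = "\<lambda>\<pi>. \<pi> \<circ> inv \<sigma>"])
    show "(\<lambda>\<pi>. \<pi> \<circ> \<sigma>) ` {\<pi>\<in>two_to_one_maps n. constant_on_fibres n \<pi> z}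
        \<subseteq> {\<pi>\<in>two_to_one_maps n. constant_on_fibres n \<pi> (z \<circ> \<sigma>)}"
      using two_to_one_maps_comp_permutes[OF _ assms] constant_on_fibres_comp_permutes[OF assms]
      by auto
    have "constant_on_fibres n (\<pi> \<circ> inv \<sigma>) z \<longleftrightarrow> constant_on_fibres n \<pi> (z \<circ> \<sigma>)" for \<pi>
      using constant_on_fibres_comp_permutes[OF inv, of \<pi> "z \<circ> \<sigma>"]
      by (simp add: comp_assoc permutes_inv_o[OF assms])
    then show "(\<lambda>\<pi>. \<pi> \<circ> inv \<sigma>) ` {\<pi>\<in>two_to_one_maps n. constant_on_fibres n \<pi> (z \<circ> \<sigma>)}
        \<subseteq> {\<pi>\<in>two_to_one_maps n. constant_on_fibres n \<pi> z}"
      using two_to_one_maps_comp_permutes[OF _ inv] by auto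
  qed (simp_all add: comp_assoc permutes_inv_o[OF assms])
  then show ?thesis
    unfolding compatible_maps_def by (rule bij_betw_same_card[symmetric])
qed

lemma compatible_maps_eq_of_hamming_weight_eq:
  assumes "hamming_weight (2 * n) z = hamming_weight (2 * n) z'"
  shows "compatible_maps n z = compatible_maps n z'"
proof -
  have "{i. i < 2 * n \<and> z' i} \<subseteq> {0..<2 * n}" "{i. i < 2 * n \<and> z i} \<subseteq> {0..<2 * n}"
    by auto
  moreover have "card {i. i < 2 * n \<and> z' i} = card {i. i < 2 * n \<and> z i}"
    using assms by (simp add: hamming_weight_def)
  ultimately obtain \<sigma> where \<sigma>: "\<sigma> permutes {0..<2 * n}"
    "\<sigma> ` {i. i < 2 * n \<and> z' i} = {i. i < 2 * n \<and> z i}"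
    by (rule obtain_permutes_image_eq[OF finite_atLeastLessThan])
  have "z' i = z (\<sigma> i)" if "i < 2 * n" for i
  proof -
    have "z' i \<longleftrightarrow> i \<in> {i. i < 2 * n \<and> z' i}"
      using that by simp
    also have "\<dots> \<longleftrightarrow> \<sigma> i \<in> \<sigma> ` {i. i < 2 * n \<and> z' i}"
      by (rule inj_image_mem_iff[OF permutes_inj[OF \<sigma>(1)], symmetric])
    also have "\<dots> \<longleftrightarrow> z (\<sigma> i)"
      unfolding \<sigma>(2) using permutes_in_image[OF \<sigma>(1), of i] that by simp
    finally show ?thesis .
  qed
  then have "constant_on_fibres n \<pi> z' \<longleftrightarrow> constant_on_fibres n \<pi> (z \<circ> \<sigma>)" for \<pi>
    by (simp add: constant_on_fibres_def)
  then have "compatible_maps n z' = compatible_maps n (z \<circ> \<sigma>)"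
    by (simp add: compatible_maps_def)
  then show ?thesis
    using compatible_maps_comp_permutes[OF \<sigma>(1)] by simp
qed

lemma card_constant_on_fibres_layer:
  assumes "\<pi> \<in> two_to_one_maps n"
  shows "card {z\<in>cube (2 * n). hamming_weight (2 * n) z = m \<and> constant_on_fibres n \<pi> z}
    = card {x\<in>cube n. 2 * hamming_weight n x = m}"
proof -
  have bij: "bij_betw (pullback_point n \<pi>) (cube n) {z\<in>cube (2 * n). constant_on_fibres n \<pi> z}"
    by (rule bij_betw_pullback_point[OF assms])
  have image: "pullback_point n \<pi> ` {x\<in>cube n. 2 * hamming_weight n x = m}
      = {z\<in>cube (2 * n). hamming_weight (2 * n) z = m \<and> constant_on_fibres n \<pi> z}"
  proof (intro equalityI subsetI)
    fix z assume z: "z \<in> pullback_point n \<pi> ` {x\<in>cube n. 2 * hamming_weight n x = m}"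
    then show "z \<in> {z\<in>cube (2 * n). hamming_weight (2 * n) z = m \<and> constant_on_fibres n \<pi> z}"
      using bij_betw_imp_surj_on[OF bij] hamming_weight_pullback_point[OF assms] by auto
  next
    fix z assume z: "z \<in> {z\<in>cube (2 * n). hamming_weight (2 * n) z = m \<and> constant_on_fibres n \<pi> z}"
    then obtain x where "x \<in> cube n" "z = pullback_point n \<pi> x"
      using bij_betw_imp_surj_on[OF bij] by (metis (no_types, lifting) imageE mem_Collect_eq)
    then show "z \<in> pullback_point n \<pi> ` {x\<in>cube n. 2 * hamming_weight n x = m}"
      using z hamming_weight_pullback_point[OF assms, of x] by auto
  qed
  have "inj_on (pullback_point n \<pi>) {x\<in>cube n. 2 * hamming_weight n x = m}"
    using bij_betw_imp_inj_on[OF bij] by (rule inj_on_subset) auto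
  then have "card (pullback_point n \<pi> ` {x\<in>cube n. 2 * hamming_weight n x = m})
      = card {x\<in>cube n. 2 * hamming_weight n x = m}"
    by (rule card_image)
  then show ?thesis
    unfolding image .
qed

lemma sum_compatible_maps_layer:
  "(\<Sum>z\<in>{z\<in>cube (2 * n). hamming_weight (2 * n) z = m}. compatible_maps n z)
    = card (two_to_one_maps n) * card {x\<in>cube n. 2 * hamming_weight n x = m}"
proof -
  let ?L = "{z\<in>cube (2 * n). hamming_weight (2 * n) z = m}"
  have "(\<Sum>z\<in>?L. compatible_maps n z)
      = (\<Sum>z\<in>?L. \<Sum>\<pi>\<in>two_to_one_maps n. of_bool (constant_on_fibres n \<pi> z))"
    unfolding compatible_maps_def
    by (simp add: of_bool_def flip: sum.inter_filter[OF finite_two_to_one_maps])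
  also have "\<dots> = (\<Sum>\<pi>\<in>two_to_one_maps n. \<Sum>z\<in>?L. of_bool (constant_on_fibres n \<pi> z))"
    by (rule sum.swap)
  also have "\<dots> = (\<Sum>\<pi>\<in>two_to_one_maps n. card {x\<in>cube n. 2 * hamming_weight n x = m})"
  proof (rule sum.cong[OF refl])
    fix \<pi> assume "\<pi> \<in> two_to_one_maps n"
    have "finite ?L" by (simp add: finite_cube)
    then have "(\<Sum>z\<in>?L. of_bool (constant_on_fibres n \<pi> z)) = card {z\<in>?L. constant_on_fibres n \<pi> z}"
      by (simp add: of_bool_def flip: sum.inter_filter)
    also have "{z\<in>?L. constant_on_fibres n \<pi> z}
        = {z\<in>cube (2 * n). hamming_weight (2 * n) z = m \<and> constant_on_fibres n \<pi> z}"
      by auto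
    finally show "(\<Sum>z\<in>?L. of_bool (constant_on_fibres n \<pi> z))
        = card {x\<in>cube n. 2 * hamming_weight n x = m}"
      using card_constant_on_fibres_layer[OF \<open>\<pi> \<in> two_to_one_maps n\<close>] by simp
  qed
  finally show ?thesis by simp
qed

lemma compatible_maps_eq:
  assumes "z \<in> cube (2 * n)" "hamming_weight (2 * n) z = 2 * k"
  shows "((2 * n) choose (2 * k)) * compatible_maps n z = card (two_to_one_maps n) * (n choose k)"
proof -
  let ?L = "{z\<in>cube (2 * n). hamming_weight (2 * n) z = 2 * k}"
  have "card ?L * compatible_maps n z = (\<Sum>z'\<in>?L. compatible_maps n z)"
    by simp
  also have "\<dots> = (\<Sum>z'\<in>?L. compatible_maps n z')"
  proof (rule sum.cong[OF refl])
    fix z' assume "z' \<in> ?L"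
    then show "compatible_maps n z = compatible_maps n z'"
      using assms(2) by (intro compatible_maps_eq_of_hamming_weight_eq) simp
  qed
  also have "\<dots> = card (two_to_one_maps n) * card {x\<in>cube n. hamming_weight n x = k}"
    unfolding sum_compatible_maps_layer by simp
  finally show ?thesis
    by (simp add: card_cube_hamming_weight_eq)
qed

\<comment> \<open>The weight under mu_{p,n} of the point x with pullback_point n pi x = z.\<close>
definition pullback_bias :: "real \<Rightarrow> nat \<Rightarrow> (nat \<Rightarrow> bool) \<Rightarrow> real" where
  "pullback_bias p n z =
     p ^ (hamming_weight (2 * n) z div 2) * (1 - p) ^ (n - hamming_weight (2 * n) z div 2)"

lemma pexp_pullback_point:
  assumes "\<pi> \<in> two_to_one_maps n"
  shows "pexp p n (\<lambda>x. of_bool (h (pullback_point n \<pi> x)))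
    = (\<Sum>z\<in>cube (2 * n).
        if constant_on_fibres n \<pi> z then pullback_bias p n z * of_bool (h z) else 0)"
proof -
  have "pexp p n (\<lambda>x. of_bool (h (pullback_point n \<pi> x)))
      = (\<Sum>x\<in>cube n. pullback_bias p n (pullback_point n \<pi> x) * of_bool (h (pullback_point n \<pi> x)))"
    unfolding pexp_def pbias_eq_hamming_weight pullback_bias_def
    by (simp add: hamming_weight_pullback_point[OF assms])
  also have "\<dots> = (\<Sum>z\<in>{z\<in>cube (2 * n). constant_on_fibres n \<pi> z}.
      pullback_bias p n z * of_bool (h z))"
    by (rule sum.reindex_bij_betw[OF bij_betw_pullback_point[OF assms]])
  finally show ?thesis
    by (simp add: sum.inter_filter[OF finite_cube])
qed

lemma card_two_to_one_maps_mult_pullback_exp: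
  "real (card (two_to_one_maps n)) * pullback_exp p n h
    = (\<Sum>z\<in>cube (2 * n). real (compatible_maps n z) * pullback_bias p n z * of_bool (h z))"
proof -
  have "real (card (two_to_one_maps n)) * pullback_exp p n h
      = (\<Sum>\<pi>\<in>two_to_one_maps n. pexp p n (\<lambda>x. of_bool (h (pullback_point n \<pi> x))))"
    using finite_two_to_one_maps two_to_one_maps_nonempty
    by (simp add: pullback_exp_def pullback_point_def card_gt_0_iff)
  also have "\<dots> = (\<Sum>z\<in>cube (2 * n). \<Sum>\<pi>\<in>two_to_one_maps n.
      if constant_on_fibres n \<pi> z then pullback_bias p n z * of_bool (h z) else 0)"
    by (simp add: pexp_pullback_point sum.swap[of _ "two_to_one_maps n"])
  also have "\<dots>
      = (\<Sum>z\<in>cube (2 * n). real (compatible_maps n z) * pullback_bias p n z * of_bool (h z))"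
    unfolding compatible_maps_def
    by (simp add: mult.assoc flip: sum.inter_filter[OF finite_two_to_one_maps])
  finally show ?thesis .
qed

\<comment> \<open>After division by the number of two-to-one maps, the right-hand side is the probability
  of z under the pull-back distribution.\<close>
lemma card_two_to_one_maps_mult_pbias_le:
  assumes "z \<in> cube (2 * n)" "even (hamming_weight (2 * n) z)" "0 \<le> p" "p \<le> 1"
  shows "real (card (two_to_one_maps n)) * pbias p (2 * n) z
    \<le> real (compatible_maps n z) * pullback_bias p n z"
proof -
  obtain k where k: "hamming_weight (2 * n) z = 2 * k"
    using assms(2) by blast
  have "k \<le> n"
    using hamming_weight_le[of "2 * n" z] k by simp
  then have binom_pos: "0 < real ((2 * n) choose (2 * k))"
    by simp
  have count: "real ((2 * n) choose (2 * k)) * real (compatible_maps n z)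
      = real (card (two_to_one_maps n)) * real (n choose k)"
    using compatible_maps_eq[OF assms(1) k] by (metis of_nat_mult)
  have "real ((2 * n) choose (2 * k)) * (real (card (two_to_one_maps n)) * pbias p (2 * n) z)
      = real (card (two_to_one_maps n)) * Bernstein (2 * n) (2 * k) p"
    by (simp add: pbias_eq_hamming_weight k Bernstein_def diff_mult_distrib2)
  also have "\<dots> \<le> real (card (two_to_one_maps n)) * Bernstein n k p"
    using assms by (intro mult_left_mono Bernstein_double_le) auto
  also have "\<dots> = real ((2 * n) choose (2 * k)) * (real (compatible_maps n z) * pullback_bias p n z)"
    using count by (simp add: Bernstein_def pullback_bias_def k)
  finally show ?thesis
    using binom_pos by simp
qed

lemma even_mass_le_pullback_exp:
  assumes "0 \<le> p" "p \<le> 1"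
  shows "even_mass p (2 * n) h \<le> pullback_exp p n h"
proof -
  let ?M = "real (card (two_to_one_maps n))"
  have M_pos: "0 < ?M"
    using finite_two_to_one_maps two_to_one_maps_nonempty by (simp add: card_gt_0_iff)
  have bias_nonneg: "0 \<le> pullback_bias p n z" for z
    using assms by (simp add: pullback_bias_def)
  have "?M * even_mass p (2 * n) h
      = (\<Sum>z\<in>{z\<in>cube (2 * n). even (hamming_weight (2 * n) z)}.
          ?M * pbias p (2 * n) z * of_bool (h z))"
    by (simp add: even_mass_def sum_distrib_left mult.assoc)
  also have "\<dots> \<le> (\<Sum>z\<in>{z\<in>cube (2 * n). even (hamming_weight (2 * n) z)}.
      real (compatible_maps n z) * pullback_bias p n z * of_bool (h z))"
    using assms by (intro sum_mono mult_right_mono card_two_to_one_maps_mult_pbias_le) auto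
  also have "\<dots>
      \<le> (\<Sum>z\<in>cube (2 * n). real (compatible_maps n z) * pullback_bias p n z * of_bool (h z))"
    using bias_nonneg by (intro sum_mono2 finite_cube) auto
  also have "\<dots> = ?M * pullback_exp p n h"
    by (rule card_two_to_one_maps_mult_pullback_exp[symmetric])
  finally show ?thesis
    using M_pos by simp
qed

theorem mainTheorem4:
  shows "\<forall>lam::real. 0 < lam \<and> lam < 1/2 \<longrightarrow>
    (\<forall>\<delta>::real. \<delta> > 0 \<longrightarrow>
      (\<exists>\<gamma>::real. \<gamma> > 0 \<and> (\<exists>\<beta>::real. \<beta> > 0 \<and>
        (\<forall>(p::real) (n::nat) (h::(nat \<Rightarrow> bool) \<Rightarrow> bool).
           lam < p \<and> p < 1 - lam \<and> 0 < n
           \<and> pexp p (2*n) (\<lambda>x. of_bool (h x)) \<ge> \<delta>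
           \<and> total_influence p (2*n) h \<le> \<gamma> * real n
           \<longrightarrow> pullback_exp p n h \<ge> \<beta>))))"
proof (intro allI impI exI conjI)
  fix lam \<delta> :: real
  assume lam: "0 < lam \<and> lam < 1/2" and "\<delta> > 0"
  show "0 < lam\<^sup>2 * \<delta>" and "0 < \<delta> * lam / 4"
    using lam \<open>\<delta> > 0\<close> by simp_all
  fix p n h
  assume H: "lam < p \<and> p < 1 - lam \<and> 0 < n
    \<and> pexp p (2*n) (\<lambda>x. of_bool (h x)) \<ge> \<delta>
    \<and> total_influence p (2*n) h \<le> lam\<^sup>2 * \<delta> * real n"
  have "\<delta> * lam / 4 \<le> even_mass p (2 * n) h"
    using lam H by (intro even_mass_ge_of_low_total_influence) auto
  also have "\<dots> \<le> pullback_exp p n h"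
    using lam H by (intro even_mass_le_pullback_exp) auto
  finally show "\<delta> * lam / 4 \<le> pullback_exp p n h" .
qed

end
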